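(* Let $f,g:[a;b]\to\mathbb{R}$ be two regulated functions. Let $[c;d]\subset[a;b]$, let $c=t_0<t_1<\ldots<t_n=d$ be any partition of $[c;d]$, and let $\xi_0=c$ and $\xi_1,\ldots,\xi_n$ be such that $t_{i-1}\le\xi_i\le t_i$ for $i=1,2,\ldots,n$. Let $\delta_{-1}:=\sup_{c\le t\le d}|f(t)-f(c)|$, and let $\delta_0\ge\delta_1\ge\ldots\ge\delta_r\ge0$ and $\varepsilon_0\ge\varepsilon_1\ge\ldots\ge\varepsilon_r\ge0$. Then \[ \left|\sum_{i=1}^{n}f(\xi_i)\left[g(t_i)-g(t_{i-1})\right]-f(c)\left[g(d)-g(c)\right]\right| \le\sum_{k=0}^{r}2^{k}\delta_{k-1}\cdot TV(g,[c;d],\varepsilon_k)+\sum_{k=0}^{r}2^{k}\varepsilon_k\cdot TV(f,[c;d],\delta_k)+n\delta_r\varepsilon_r. \]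
   Context: A function $h:[a;b]\to\mathbb{R}$ is regulated if the one-sided finite limits $\lim_{t\to a+}h(t)$, $\lim_{t\to b-}h(t)$ exist and, for every $x\in(a;b)$, both finite limits $\lim_{t\to x-}h(t)$ and $\lim_{t\to x+}h(t)$ exist. The total variation of $h$ on $[c;d]$ is $TV(h,[c;d],0)=\sup_n\sup_{c\le t_1<\dots<t_n\le d}\sum_{i=2}^{n}|h(t_i)-h(t_{i-1})|$. For $\delta\ge0$, the truncated variation of $h$ on $[c;d]$ is $TV(h,[c;d],\delta):=\inf\{TV(u,[c;d],0): \sup_{c\le t\le d}|h(t)-u(t)|\le\delta/2\}$; for regulated $h$ and $\delta>0$ it equals $\sup_n\sup_{c\le t_1<\dots<t_n\le d}\sum_{i=2}^{n}\max\{|h(t_i)-h(t_{i-1})|-\delta,0\}$. *)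

theory Defs
  imports "HOL-Analysis.Analysis" "HOL-Library.Extended_Real"
begin

definition regulated :: "(real \<Rightarrow> real) \<Rightarrow> real \<Rightarrow> real \<Rightarrow> bool" where
  "regulated h a b \<longleftrightarrow>
     (\<exists>l. (h \<longlongrightarrow> l) (at a within {a<..b})) \<and>
     (\<exists>l. (h \<longlongrightarrow> l) (at b within {a..<b})) \<and>
     (\<forall>x\<in>{a<..<b}. (\<exists>l. (h \<longlongrightarrow> l) (at_left x)) \<and> (\<exists>l. (h \<longlongrightarrow> l) (at_right x)))"

text \<open>Values in ereal, since the (untruncated) total variation may be infinite.\<close>
definition TV :: "(real \<Rightarrow> real) \<Rightarrow> real \<Rightarrow> real \<Rightarrow> real \<Rightarrow> ereal" where
  "TV h c d \<delta> = Sup {ereal (\<Sum>i\<in>{1..<m}. max (\<bar>h (s i) - h (s (i - 1))\<bar> - \<delta>) 0) | m s.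
       (\<forall>i<m. c \<le> s i \<and> s i \<le> d) \<and> (\<forall>i. Suc i < m \<longrightarrow> s i < s (Suc i))}"

end

theory Submission
  imports Defs
begin

text \<open>
  Write the left-hand side as \<open>\<Sum> F_i (G_i - G_(i-1))\<close> with \<open>F_i = f(\<xi>_i) - f(c)\<close> and
  \<open>G_i = g(t_i)\<close>. A monotone finite sample of a function \<open>h\<close> can be replaced by a sequence
  within \<open>e/2\<close> of it whose variation is at most \<open>TV(h,[c;d],e)\<close>: the largest truncated
  variation along index chains ending at \<open>k\<close> is a potential from which such a sequence is
  built backwards by clamping. Let \<open>P_k, Q_k\<close> be approximants of \<open>F, G\<close> at scales
  \<open>\<delta>_(k-1), \<epsilon>_(k-1)\<close>, with \<open>P_0 = Q_0 = 0\<close>. The sum of \<open>F - P_k\<close> against the increments of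
  \<open>G - Q_k\<close> splits into the sum against the increments of \<open>Q_(k+1) - Q_k\<close>, at most
  \<open>\<delta>_(k-1)\<close> times their variation; a sum by parts of \<open>P_(k+1) - P_k\<close> against \<open>G - Q_(k+1)\<close>,
  at most \<open>\<epsilon>_k\<close> times a variation; and the same sum one level finer, which after level \<open>r\<close>
  is at most \<open>n \<delta>_r \<epsilon>_r\<close>. Both variations at level \<open>k\<close> are bounded by the truncated
  variation at the finer scale, whence the factor \<open>2 \<le> 2^k\<close>.
  Regulatedness is used only to make \<open>f\<close> bounded, so that \<open>\<delta>_(-1)\<close> is finite.
\<close>

section \<open>Truncated variation of finite samples\<close>

definition discrete_variation :: "(nat \<Rightarrow> real) \<Rightarrow> nat \<Rightarrow> real" where
  "discrete_variation z n = (\<Sum>i=1..n. \<bar>z i - z (i - 1)\<bar>)"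

lemma discrete_variation_nonneg: "0 \<le> discrete_variation z n"
  unfolding discrete_variation_def by (simp add: sum_nonneg)

lemma discrete_variation_Suc:
  "discrete_variation z (Suc n) = discrete_variation z n + \<bar>z (Suc n) - z n\<bar>"
  by (simp add: discrete_variation_def)

lemma discrete_variation_cong:
  "(\<And>i. i \<le> n \<Longrightarrow> z i = w i) \<Longrightarrow> discrete_variation z n = discrete_variation w n"
  unfolding discrete_variation_def by (intro sum.cong) auto

lemma discrete_variation_diff_le:
  "discrete_variation (\<lambda>i. z i - w i) n \<le> discrete_variation z n + discrete_variation w n"
  unfolding discrete_variation_def sum.distrib[symmetric] by (intro sum_mono) linarith

lemma sum_telescope_shift:
  fixes V :: "nat \<Rightarrow> real"
  shows "(\<Sum>i=1..n. V i - V (i - 1)) = V n - V 0"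
  by (induction n) auto

lemma abs_diff_le_discrete_variation: "\<bar>z n - z 0\<bar> \<le> discrete_variation z n"
  unfolding discrete_variation_def sum_telescope_shift[symmetric] by (rule sum_abs)

lemma TV_ge_chain_sum:
  assumes "\<forall>i<m. c \<le> s i \<and> s i \<le> d" and "\<forall>i. Suc i < m \<longrightarrow> s i < s (Suc i)"
  shows "ereal (\<Sum>i\<in>{1..<m}. max (\<bar>h (s i) - h (s (i - 1))\<bar> - e) 0) \<le> TV h c d e"
  unfolding TV_def by (rule Sup_upper) (use assms in blast)

lemma TV_antimono:
  assumes "e1 \<le> e2"
  shows "TV h c d e2 \<le> TV h c d e1"
  unfolding TV_def[of h c d e2]
proof (rule Sup_least, clarify)
  fix m and s :: "nat \<Rightarrow> real"
  assume "\<forall>i<m. c \<le> s i \<and> s i \<le> d" and "\<forall>i. Suc i < m \<longrightarrow> s i < s (Suc i)"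
  then have "ereal (\<Sum>i\<in>{1..<m}. max (\<bar>h (s i) - h (s (i - 1))\<bar> - e1) 0) \<le> TV h c d e1"
    by (rule TV_ge_chain_sum)
  moreover have "(\<Sum>i\<in>{1..<m}. max (\<bar>h (s i) - h (s (i - 1))\<bar> - e2) 0)
      \<le> (\<Sum>i\<in>{1..<m}. max (\<bar>h (s i) - h (s (i - 1))\<bar> - e1) 0)"
    using assms by (intro sum_mono) simp
  ultimately show "ereal (\<Sum>i\<in>{1..<m}. max (\<bar>h (s i) - h (s (i - 1))\<bar> - e2) 0) \<le> TV h c d e1"
    by (meson ereal_less_eq(3) order_trans)
qed

text \<open>\<open>chain_tv y e k\<close> is the largest truncated variation
  \<open>\<Sum> max (\<bar>y j\<^sub>i - y j\<^sub>i\<^sub>-\<^sub>1\<bar> - e) 0\<close> along an index chain \<open>j\<^sub>0 < \<dots> < j\<^sub>m = k\<close>.\<close>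

fun chain_tv :: "(nat \<Rightarrow> real) \<Rightarrow> real \<Rightarrow> nat \<Rightarrow> real" where
  "chain_tv y e k = (if k = 0 then 0
     else max 0 (Max ((\<lambda>j. chain_tv y e j + max (\<bar>y k - y j\<bar> - e) 0) ` {..<k})))"

declare chain_tv.simps [simp del]

lemma chain_tv_nonneg: "0 \<le> chain_tv y e k"
  by (subst chain_tv.simps) simp

lemma chain_tv_step:
  assumes "j < k"
  shows "chain_tv y e j + \<bar>y k - y j\<bar> - e \<le> chain_tv y e k"
proof -
  have "chain_tv y e j + max (\<bar>y k - y j\<bar> - e) 0
      \<le> Max ((\<lambda>j. chain_tv y e j + max (\<bar>y k - y j\<bar> - e) 0) ` {..<k})"
    using assms by (intro Max_ge) auto
  also have "\<dots> \<le> chain_tv y e k"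
    using assms by (subst (2) chain_tv.simps) simp
  finally show ?thesis by linarith
qed

lemma chain_tv_attained:
  "chain_tv y e k = 0 \<or> (\<exists>j<k. chain_tv y e k = chain_tv y e j + max (\<bar>y k - y j\<bar> - e) 0)"
proof (cases "k = 0")
  case True
  then show ?thesis by (subst chain_tv.simps) simp
next
  case False
  let ?M = "Max ((\<lambda>j. chain_tv y e j + max (\<bar>y k - y j\<bar> - e) 0) ` {..<k})"
  have "?M \<in> (\<lambda>j. chain_tv y e j + max (\<bar>y k - y j\<bar> - e) 0) ` {..<k}"
    using False by (intro Max_in) auto
  then obtain j where "j < k" "?M = chain_tv y e j + max (\<bar>y k - y j\<bar> - e) 0"
    by auto
  moreover have "chain_tv y e k = max 0 ?M"
    using False by (subst chain_tv.simps) simp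
  ultimately show ?thesis by (auto simp: max_def)
qed

lemma chain_tv_realized:
  fixes h :: "real \<Rightarrow> real" and x :: "nat \<Rightarrow> real"
  assumes "0 \<le> e" and mono: "mono_on {..n} x" and lower: "\<forall>i\<le>n. c \<le> x i" and "k \<le> n"
  shows "\<exists>m s. 0 < m \<and> s (m - 1) = x k \<and> (\<forall>i<m. c \<le> s i \<and> s i \<le> x k)
     \<and> (\<forall>i. Suc i < m \<longrightarrow> s i < s (Suc i))
     \<and> chain_tv (\<lambda>i. h (x i)) e k \<le> (\<Sum>i\<in>{1..<m}. max (\<bar>h (s i) - h (s (i - 1))\<bar> - e) 0)"
  using \<open>k \<le> n\<close>
proof (induction k rule: less_induct)
  case (less k)
  let ?y = "\<lambda>i. h (x i)"
  from chain_tv_attained[of ?y e k] show ?case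
  proof
    assume "chain_tv ?y e k = 0"
    then show ?thesis
      using less.prems lower by (intro exI[of _ 1] exI[of _ "\<lambda>_. x k"]) auto
  next
    assume "\<exists>j<k. chain_tv ?y e k = chain_tv ?y e j + max (\<bar>?y k - ?y j\<bar> - e) 0"
    then obtain j where j: "j < k" "chain_tv ?y e k = chain_tv ?y e j + max (\<bar>?y k - ?y j\<bar> - e) 0"
      by blast
    from less.IH[of j] j(1) less.prems obtain m s where
      m: "0 < m" "s (m - 1) = x j" "\<forall>i<m. c \<le> s i \<and> s i \<le> x j"
        "\<forall>i. Suc i < m \<longrightarrow> s i < s (Suc i)"
        "chain_tv ?y e j \<le> (\<Sum>i\<in>{1..<m}. max (\<bar>h (s i) - h (s (i - 1))\<bar> - e) 0)"
      by auto
    have "x j \<le> x k" using mono_onD[OF mono] j(1) less.prems by simp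
    \<comment> \<open>\<open>TV\<close> only admits strictly increasing points, so a repeated sample point is dropped\<close>
    then consider "x j = x k" | "x j < x k" by linarith
    then show ?thesis
    proof cases
      case 1
      then show ?thesis using m j \<open>0 \<le> e\<close> by (intro exI[of _ m] exI[of _ s]) auto
    next
      case 2
      define s' where "s' = s(m := x k)"
      have ends: "s' m = x k" "s' (m - 1) = x j" using m(1,2) by (auto simp: s'_def)
      have "(\<Sum>i\<in>{1..<m}. max (\<bar>h (s' i) - h (s' (i - 1))\<bar> - e) 0)
          = (\<Sum>i\<in>{1..<m}. max (\<bar>h (s i) - h (s (i - 1))\<bar> - e) 0)"
        by (intro sum.cong) (auto simp: s'_def)
      then have sum: "(\<Sum>i\<in>{1..<Suc m}. max (\<bar>h (s' i) - h (s' (i - 1))\<bar> - e) 0)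
          = (\<Sum>i\<in>{1..<m}. max (\<bar>h (s i) - h (s (i - 1))\<bar> - e) 0)
            + max (\<bar>?y k - ?y j\<bar> - e) 0"
        using m(1) ends by (simp add: sum.atLeastLessThan_Suc)
      have "\<forall>i. Suc i < Suc m \<longrightarrow> s' i < s' (Suc i)"
        using m(1,2,4) 2 by (auto simp: s'_def less_Suc_eq)
      moreover have "\<forall>i<Suc m. c \<le> s' i \<and> s' i \<le> x k"
        using m(3) 2 lower less.prems by (auto simp: s'_def less_Suc_eq)
      moreover have "chain_tv ?y e k
          \<le> (\<Sum>i\<in>{1..<Suc m}. max (\<bar>h (s' i) - h (s' (i - 1))\<bar> - e) 0)"
        using m(5) j(2) sum by linarith
      ultimately show ?thesis
        using ends by (intro exI[of _ "Suc m"] exI[of _ s']) simp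
    qed
  qed
qed

lemma chain_tv_le_TV:
  fixes h :: "real \<Rightarrow> real" and x :: "nat \<Rightarrow> real"
  assumes "0 \<le> e" and "mono_on {..n} x" and range: "x ` {..n} \<subseteq> {c..d}" and "k \<le> n"
  shows "ereal (chain_tv (\<lambda>i. h (x i)) e k) \<le> TV h c d e"
proof -
  have "\<forall>i\<le>n. c \<le> x i" using range by auto
  then obtain m s where
    s: "s (m - 1) = x k" "\<forall>i<m. c \<le> s i \<and> s i \<le> x k" "\<forall>i. Suc i < m \<longrightarrow> s i < s (Suc i)"
      "chain_tv (\<lambda>i. h (x i)) e k \<le> (\<Sum>i\<in>{1..<m}. max (\<bar>h (s i) - h (s (i - 1))\<bar> - e) 0)"
    using chain_tv_realized[of e n x c k h] assms(1,2,4) by blast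
  have "\<forall>i<m. c \<le> s i \<and> s i \<le> d"
    using s(2) range \<open>k \<le> n\<close> by force
  from TV_ge_chain_sum[OF this s(3)] s(4) show ?thesis
    by (meson ereal_less_eq(3) order_trans)
qed

lemma clamp_properties:
  fixes v y w e :: real
  assumes "0 \<le> e"
  defines "u \<equiv> max (y - e/2) (min (y + e/2) v)"
  shows "\<bar>u - y\<bar> \<le> e/2" and "\<bar>v - u\<bar> = max (\<bar>v - y\<bar> - e/2) 0"
    and "\<bar>u - w\<bar> + \<bar>v - u\<bar> \<le> max \<bar>v - w\<bar> (\<bar>y - w\<bar> + \<bar>v - y\<bar> - e)"
  using assms by (auto simp: u_def max_def min_def abs_if)

text \<open>The approximant is built backwards from \<open>n\<close>, moving each value only as far as
  necessary (clamping); \<open>s\<close> acts as a potential that pays for the moves.\<close>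

lemma approximant_from_potential:
  fixes y s :: "nat \<Rightarrow> real"
  assumes "0 \<le> e" and s_nonneg: "\<And>k. 0 \<le> s k"
    and s_step: "\<And>j k. j < k \<Longrightarrow> s j + \<bar>y k - y j\<bar> - e \<le> s k"
    and "0 \<le> B" and B: "\<forall>k\<le>n. s k + \<bar>v - y k\<bar> - e/2 \<le> B"
  shows "\<exists>z. (\<forall>i\<le>n. \<bar>z i - y i\<bar> \<le> e/2) \<and> discrete_variation z n + \<bar>v - z n\<bar> \<le> B"
  using \<open>0 \<le> B\<close> B
proof (induction n arbitrary: v B)
  case 0
  define u where "u = max (y 0 - e/2) (min (y 0 + e/2) v)"
  have "\<bar>u - y 0\<bar> \<le> e/2" "\<bar>v - u\<bar> = max (\<bar>v - y 0\<bar> - e/2) 0"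
    using clamp_properties[OF \<open>0 \<le> e\<close>] unfolding u_def by blast+
  moreover have "\<bar>v - y 0\<bar> - e/2 \<le> B" using "0.prems" s_nonneg[of 0] by auto
  ultimately show ?case
    using "0.prems" by (intro exI[of _ "\<lambda>_. u"]) (simp add: discrete_variation_def)
next
  case (Suc n)
  define u where "u = max (y (Suc n) - e/2) (min (y (Suc n) + e/2) v)"
  note clamp = clamp_properties[OF \<open>0 \<le> e\<close>, where v = v and y = "y (Suc n)", folded u_def]
  have top: "s (Suc n) + \<bar>v - y (Suc n)\<bar> - e/2 \<le> B" using Suc.prems by blast
  have "\<forall>k\<le>n. s k + \<bar>u - y k\<bar> - e/2 \<le> B - \<bar>v - u\<bar>"
  proof (intro allI impI)
    fix k assume "k \<le> n"
    then have "s k + \<bar>y (Suc n) - y k\<bar> - e \<le> s (Suc n)" "s k + \<bar>v - y k\<bar> - e/2 \<le> B"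
      using s_step[of k "Suc n"] Suc.prems by auto
    moreover have "\<bar>u - y k\<bar> + \<bar>v - u\<bar> \<le> \<bar>v - y k\<bar>
        \<or> \<bar>u - y k\<bar> + \<bar>v - u\<bar> \<le> \<bar>y (Suc n) - y k\<bar> + \<bar>v - y (Suc n)\<bar> - e"
      using clamp(3)[of "y k"] by (simp add: le_max_iff_disj)
    ultimately show "s k + \<bar>u - y k\<bar> - e/2 \<le> B - \<bar>v - u\<bar>"
      using top by (elim disjE) linarith+
  qed
  moreover have "0 \<le> B - \<bar>v - u\<bar>" using clamp(2) top s_nonneg[of "Suc n"] Suc.prems(1) by auto
  ultimately obtain z where z: "\<forall>i\<le>n. \<bar>z i - y i\<bar> \<le> e/2"
    "discrete_variation z n + \<bar>u - z n\<bar> \<le> B - \<bar>v - u\<bar>"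
    using Suc.IH by blast
  define z' where "z' = z(Suc n := u)"
  have "discrete_variation z' (Suc n) = discrete_variation z n + \<bar>u - z n\<bar>"
    using discrete_variation_cong[of n z' z] by (simp add: discrete_variation_Suc z'_def)
  moreover have "\<forall>i\<le>Suc n. \<bar>z' i - y i\<bar> \<le> e/2"
    using z(1) clamp(1) by (auto simp: z'_def le_Suc_eq)
  moreover have "z' (Suc n) = u" by (simp add: z'_def)
  ultimately show ?case
    using z(2) by (intro exI[of _ z']) simp
qed

lemma intervals_common_point:
  fixes L U :: "'i \<Rightarrow> 'a::linorder"
  assumes "finite I" and "I \<noteq> {}" and "\<And>i j. i \<in> I \<Longrightarrow> j \<in> I \<Longrightarrow> L i \<le> U j"
  shows "\<exists>v. \<forall>i\<in>I. L i \<le> v \<and> v \<le> U i"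
proof (intro exI ballI conjI)
  fix i assume "i \<in> I"
  show "L i \<le> Max (L ` I)" using assms(1) \<open>i \<in> I\<close> by simp
  have "Max (L ` I) \<in> L ` I" using assms(1,2) by simp
  then obtain j where "j \<in> I" "Max (L ` I) = L j" by auto
  then show "Max (L ` I) \<le> U i" using assms(3) \<open>i \<in> I\<close> by simp
qed

lemma truncated_variation_approximant:
  fixes h :: "real \<Rightarrow> real" and x :: "nat \<Rightarrow> real"
  assumes "0 \<le> e" and "mono_on {..n} x" and "x ` {..n} \<subseteq> {c..d}"
  shows "\<exists>z. (\<forall>i\<le>n. \<bar>z i - h (x i)\<bar> \<le> e/2) \<and> ereal (discrete_variation z n) \<le> TV h c d e"
proof -
  define y where "y i = h (x i)" for i
  define s where "s = chain_tv y e"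
  obtain m where m: "m \<le> n" "\<forall>k\<le>n. s k \<le> s m"
    using Max_in[of "s ` {..n}"] Max_ge[of "s ` {..n}"] by fastforce
  have step: "s j + \<bar>y k - y j\<bar> - e \<le> s k" if "j < k" for j k
    using chain_tv_step[OF that] unfolding s_def .
  have near: "\<bar>y k - y j\<bar> \<le> e + (s m - s j) + (s m - s k)" if "j \<le> n" "k \<le> n" for j k
  proof -
    have "s j \<le> s m" "s k \<le> s m" "0 \<le> e" using m(2) that \<open>0 \<le> e\<close> by auto
    then show ?thesis
      using step[of j k] step[of k j] by (cases j k rule: linorder_cases) (auto simp: abs_minus_commute)
  qed
  obtain v where v: "\<forall>k\<in>{..n}. y k - e/2 - (s m - s k) \<le> v \<and> v \<le> y k + e/2 + (s m - s k)"
    using intervals_common_point[of "{..n}" "\<lambda>k. y k - e/2 - (s m - s k)" "\<lambda>k. y k + e/2 + (s m - s k)"]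
      near by fastforce
  have "\<forall>k\<le>n. s k + \<bar>v - y k\<bar> - e/2 \<le> s m"
  proof (intro allI impI)
    fix k assume "k \<le> n"
    then have "y k - e/2 - (s m - s k) \<le> v \<and> v \<le> y k + e/2 + (s m - s k)"
      using v by simp
    then have "\<bar>v - y k\<bar> \<le> e/2 + (s m - s k)"
      unfolding abs_diff_le_iff by linarith
    then show "s k + \<bar>v - y k\<bar> - e/2 \<le> s m" by linarith
  qed
  moreover have s_nonneg: "0 \<le> s k" for k
    unfolding s_def by (rule chain_tv_nonneg)
  ultimately obtain z where z: "\<forall>i\<le>n. \<bar>z i - y i\<bar> \<le> e/2"
      "discrete_variation z n + \<bar>v - z n\<bar> \<le> s m"
    using approximant_from_potential[where y = y and s = s and e = e, OF \<open>0 \<le> e\<close> s_nonneg step s_nonneg]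
    by blast
  have "ereal (discrete_variation z n) \<le> ereal (s m)" using z(2) by simp
  also have "\<dots> \<le> TV h c d e"
    using chain_tv_le_TV[OF assms m(1)] unfolding s_def y_def .
  finally show ?thesis using z(1) unfolding y_def by blast
qed

lemma truncated_variation_approximants:
  fixes h :: "real \<Rightarrow> real" and x :: "nat \<Rightarrow> real" and e :: "nat \<Rightarrow> real"
  assumes "\<forall>k\<le>r. 0 \<le> e k" and "mono_on {..n} x" and "x ` {..n} \<subseteq> {c..d}"
  shows "\<exists>Z. \<forall>k\<le>r. (\<forall>i\<le>n. \<bar>Z k i - h (x i)\<bar> \<le> e k / 2)
    \<and> ereal (discrete_variation (Z k) n) \<le> TV h c d (e k)"
proof -
  have "\<forall>k\<in>{..r}. \<exists>z. (\<forall>i\<le>n. \<bar>z i - h (x i)\<bar> \<le> e k / 2)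
      \<and> ereal (discrete_variation z n) \<le> TV h c d (e k)"
    using truncated_variation_approximant[OF _ assms(2,3)] assms(1) by simp
  then show ?thesis by (auto dest!: bchoice)
qed

section \<open>Regulated functions are bounded\<close>

lemma regulated_left_limit:
  assumes "regulated f a b" and "x \<in> {a..b}"
  shows "\<exists>l. (f \<longlongrightarrow> l) (at x within {a..b} \<inter> {..<x})"
proof -
  consider "x = a" | "a < x" "x = b" | "a < x" "x < b" using assms(2) by fastforce
  then show ?thesis
  proof cases
    case 1
    then have "{a..b} \<inter> {..<x} = {}" by auto
    then show ?thesis by simp
  next
    case 2
    then have "{a..b} \<inter> {..<x} = {a..<b}" by auto
    then show ?thesis using assms(1) 2 unfolding regulated_def by auto
  next
    case 3
    then have "x \<in> {a<..<b}" by simp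
    then obtain l where "(f \<longlongrightarrow> l) (at x within {..<x})"
      using assms(1) unfolding regulated_def by blast
    then show ?thesis by (blast intro: tendsto_within_subset)
  qed
qed

lemma regulated_right_limit:
  assumes "regulated f a b" and "x \<in> {a..b}"
  shows "\<exists>l. (f \<longlongrightarrow> l) (at x within {a..b} \<inter> {x<..})"
proof -
  consider "x = b" | "x = a" "a < b" | "a < x" "x < b" using assms(2) by fastforce
  then show ?thesis
  proof cases
    case 1
    then have "{a..b} \<inter> {x<..} = {}" by auto
    then show ?thesis by simp
  next
    case 2
    then have "{a..b} \<inter> {x<..} = {a<..b}" by auto
    then show ?thesis using assms(1) 2 unfolding regulated_def by auto
  next
    case 3
    then have "x \<in> {a<..<b}" by simp
    then obtain l where "(f \<longlongrightarrow> l) (at x within {x<..})"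
      using assms(1) unfolding regulated_def by blast
    then show ?thesis by (blast intro: tendsto_within_subset)
  qed
qed

lemma regulated_locally_bounded:
  assumes "regulated f a b" and "x \<in> {a..b}"
  shows "\<exists>e>0. \<exists>K. \<forall>y\<in>{a..b}. dist y x < e \<longrightarrow> \<bar>f y\<bar> \<le> K"
proof -
  define S where "S = ({a..b} \<inter> {..<x}) \<union> ({a..b} \<inter> {x<..})"
  obtain l1 l2 where l1: "(f \<longlongrightarrow> l1) (at x within {a..b} \<inter> {..<x})"
    and l2: "(f \<longlongrightarrow> l2) (at x within {a..b} \<inter> {x<..})"
    using regulated_left_limit[OF assms] regulated_right_limit[OF assms] by blast
  have "eventually (\<lambda>y. \<bar>f y\<bar> \<le> max \<bar>l1\<bar> \<bar>l2\<bar> + 1) (at x within S)"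
    unfolding S_def at_within_union eventually_sup
    using tendstoD[OF l1 zero_less_one] tendstoD[OF l2 zero_less_one]
    by (auto elim!: eventually_mono simp: dist_real_def)
  then obtain e where "e > 0" and e: "\<forall>y\<in>S. y \<noteq> x \<and> dist y x < e \<longrightarrow> \<bar>f y\<bar> \<le> max \<bar>l1\<bar> \<bar>l2\<bar> + 1"
    unfolding eventually_at by blast
  have "\<forall>y\<in>{a..b}. dist y x < e \<longrightarrow> \<bar>f y\<bar> \<le> max (max \<bar>l1\<bar> \<bar>l2\<bar> + 1) \<bar>f x\<bar>"
  proof (intro ballI impI)
    fix y assume "y \<in> {a..b}" "dist y x < e"
    then consider "y = x" | "y \<in> S" "y \<noteq> x"
      by (cases y x rule: linorder_cases) (auto simp: S_def)
    then show "\<bar>f y\<bar> \<le> max (max \<bar>l1\<bar> \<bar>l2\<bar> + 1) \<bar>f x\<bar>"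
    proof cases
      case 2
      then show ?thesis using e \<open>dist y x < e\<close> by (blast intro: max.coboundedI1)
    qed simp
  qed
  then show ?thesis using \<open>e > 0\<close> by blast
qed

lemma regulated_bounded:
  assumes "regulated f a b"
  shows "\<exists>B. \<forall>s\<in>{a..b}. \<bar>f s\<bar> \<le> B"
proof -
  obtain E K where EK: "\<forall>x\<in>{a..b}. E x > 0 \<and> (\<forall>y\<in>{a..b}. dist y x < E x \<longrightarrow> \<bar>f y\<bar> \<le> K x)"
    using regulated_locally_bounded[OF assms] by metis
  then have cover: "{a..b} \<subseteq> (\<Union>x\<in>{a..b}. ball x (E x))" by force
  obtain C where C: "C \<subseteq> {a..b}" "finite C" "{a..b} \<subseteq> (\<Union>x\<in>C. ball x (E x))"
    by (rule compactE_image[OF compact_Icc _ cover]) auto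
  have "\<bar>f s\<bar> \<le> (\<Sum>x\<in>C. \<bar>K x\<bar>)" if s: "s \<in> {a..b}" for s
  proof -
    obtain x where x: "x \<in> C" "s \<in> ball x (E x)" using C(3) s by blast
    then have "\<bar>f s\<bar> \<le> K x" using EK C(1) s by (auto simp: dist_commute)
    also have "\<dots> \<le> (\<Sum>x\<in>C. \<bar>K x\<bar>)"
      using member_le_sum[of x C "\<lambda>x. \<bar>K x\<bar>"] x(1) C(2) by simp
    finally show ?thesis .
  qed
  then show ?thesis by blast
qed

section \<open>Multiscale summation by parts\<close>

lemma abs_sum_mult_le:
  fixes a b :: "nat \<Rightarrow> real"
  assumes "\<forall>i\<in>{1..n}. \<bar>a i\<bar> \<le> A"
  shows "\<bar>\<Sum>i=1..n. a i * b i\<bar> \<le> A * (\<Sum>i=1..n. \<bar>b i\<bar>)"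
proof -
  have "\<bar>\<Sum>i=1..n. a i * b i\<bar> \<le> (\<Sum>i=1..n. \<bar>a i\<bar> * \<bar>b i\<bar>)"
    using sum_abs[of "\<lambda>i. a i * b i"] by (simp add: abs_mult)
  also have "\<dots> \<le> (\<Sum>i=1..n. A * \<bar>b i\<bar>)"
    using assms by (intro sum_mono mult_right_mono) auto
  finally show ?thesis by (simp add: sum_distrib_left)
qed

lemma summation_by_parts:
  fixes V H :: "nat \<Rightarrow> real"
  shows "(\<Sum>i=1..n. (V i - V 0) * (H i - H (i - 1)))
    = (V n - V 0) * H n - (\<Sum>i=1..n. (V i - V (i - 1)) * H (i - 1))"
  by (induction n) (auto simp: algebra_simps)

lemma abs_sum_by_parts_le:
  fixes V H :: "nat \<Rightarrow> real"
  assumes "\<forall>i\<le>n. \<bar>H i\<bar> \<le> e/2"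
  shows "\<bar>\<Sum>i=1..n. (V i - V 0) * (H i - H (i - 1))\<bar> \<le> e * discrete_variation V n"
proof -
  have "\<bar>(V n - V 0) * H n\<bar> \<le> discrete_variation V n * (e/2)"
    unfolding abs_mult using abs_diff_le_discrete_variation assms discrete_variation_nonneg
    by (intro mult_mono) auto
  moreover have "\<bar>\<Sum>i=1..n. H (i - 1) * (V i - V (i - 1))\<bar> \<le> e/2 * discrete_variation V n"
    unfolding discrete_variation_def using assms by (intro abs_sum_mult_le) auto
  moreover have "(\<Sum>i=1..n. H (i - 1) * (V i - V (i - 1))) = (\<Sum>i=1..n. (V i - V (i - 1)) * H (i - 1))"
    by (simp add: mult.commute)
  ultimately show ?thesis
    unfolding summation_by_parts
    using abs_triangle_ineq4[of "(V n - V 0) * H n" "\<Sum>i=1..n. (V i - V (i - 1)) * H (i - 1)"]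
    by (simp add: algebra_simps)
qed

definition defect_sum :: "(nat \<Rightarrow> real) \<Rightarrow> (nat \<Rightarrow> real) \<Rightarrow> (nat \<Rightarrow> real) \<Rightarrow> (nat \<Rightarrow> real) \<Rightarrow> nat \<Rightarrow> real"
  where "defect_sum F G P Q n = (\<Sum>i=1..n. (F i - P i + P 0) * ((G i - Q i) - (G (i - 1) - Q (i - 1))))"

lemma defect_sum_refine:
  "defect_sum F G P Q n = defect_sum F Q' P Q n
     + (\<Sum>i=1..n. ((P' i - P i) - (P' 0 - P 0)) * ((G i - Q' i) - (G (i - 1) - Q' (i - 1))))
     + defect_sum F G P' Q' n"
  unfolding defect_sum_def sum.distrib[symmetric] by (rule sum.cong) (auto simp: algebra_simps)

lemma defect_sum_telescope:
  "defect_sum F G (P 0) (Q 0) n = (\<Sum>k=0..r. defect_sum F (Q (Suc k)) (P k) (Q k) n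
     + (\<Sum>i=1..n. ((P (Suc k) i - P k i) - (P (Suc k) 0 - P k 0))
          * ((G i - Q (Suc k) i) - (G (i - 1) - Q (Suc k) (i - 1)))))
     + defect_sum F G (P (Suc r)) (Q (Suc r)) n"
proof (induction r)
  case 0
  show ?case using defect_sum_refine[of F G "P 0" "Q 0" n "Q 1" "P 1"] by simp
next
  case (Suc r)
  then show ?case
    using defect_sum_refine[of F G "P (Suc r)" "Q (Suc r)" n "Q (Suc (Suc r))" "P (Suc (Suc r))"]
    by simp
qed

lemma abs_defect_sum_le:
  assumes "\<forall>i\<in>{1..n}. \<bar>F i - P i + P 0\<bar> \<le> A"
  shows "\<bar>defect_sum F G P Q n\<bar> \<le> A * discrete_variation (\<lambda>i. G i - Q i) n"
  unfolding defect_sum_def discrete_variation_def by (rule abs_sum_mult_le[OF assms])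

lemma stieltjes_sum_multiscale_bound:
  fixes F G :: "nat \<Rightarrow> real" and P Q :: "nat \<Rightarrow> nat \<Rightarrow> real" and \<delta> \<epsilon> :: "nat \<Rightarrow> real"
  assumes "F 0 = 0" and F_bound: "\<forall>i\<le>n. \<bar>F i\<bar> \<le> D"
    and "P 0 = (\<lambda>_. 0)" and "Q 0 = (\<lambda>_. 0)"
    and P: "\<forall>k\<le>r. \<forall>i\<le>n. \<bar>P (Suc k) i - F i\<bar> \<le> \<delta> k / 2"
    and Q: "\<forall>k\<le>r. \<forall>i\<le>n. \<bar>Q (Suc k) i - G i\<bar> \<le> \<epsilon> k / 2"
  shows "\<bar>\<Sum>i=1..n. F i * (G i - G (i - 1))\<bar>
    \<le> (\<Sum>k=0..r. (if k = 0 then D else \<delta> (k - 1))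
          * (discrete_variation (Q (Suc k)) n + discrete_variation (Q k) n))
      + (\<Sum>k=0..r. \<epsilon> k * (discrete_variation (P (Suc k)) n + discrete_variation (P k) n))
      + real n * \<delta> r * \<epsilon> r"
proof -
  define A where "A k = (if k = 0 then D else \<delta> (k - 1))" for k
  define V where "V k = discrete_variation (P k) n" for k
  define W where "W k = discrete_variation (Q k) n" for k
  have F_close: "\<bar>F i - P k i + P k 0\<bar> \<le> A k" if "k \<le> Suc r" "i \<le> n" for k i
  proof (cases k)
    case 0
    then show ?thesis using F_bound that \<open>P 0 = (\<lambda>_. 0)\<close> by (simp add: A_def)
  next
    case (Suc j)
    then have "\<bar>P k i - F i\<bar> \<le> \<delta> j / 2" "\<bar>P k 0 - F 0\<bar> \<le> \<delta> j / 2" using P that by auto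
    moreover have "A k = \<delta> j" by (simp add: A_def Suc)
    ultimately show ?thesis using \<open>F 0 = 0\<close> by arith
  qed
  have A_nonneg: "0 \<le> A k" if "k \<le> Suc r" for k
    using F_close[OF that, of 0] \<open>F 0 = 0\<close> by simp
  have eps_nonneg: "0 \<le> \<epsilon> k" if "k \<le> r" for k
  proof -
    have "\<bar>Q (Suc k) 0 - G 0\<bar> \<le> \<epsilon> k / 2" using Q that by blast
    then show ?thesis by linarith
  qed
  have T1: "\<bar>defect_sum F (Q (Suc k)) (P k) (Q k) n\<bar> \<le> A k * (W (Suc k) + W k)" if "k \<le> r" for k
  proof -
    have "\<bar>defect_sum F (Q (Suc k)) (P k) (Q k) n\<bar>
        \<le> A k * discrete_variation (\<lambda>i. Q (Suc k) i - Q k i) n"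
      using F_close that by (intro abs_defect_sum_le) auto
    also have "\<dots> \<le> A k * (W (Suc k) + W k)"
      unfolding W_def using A_nonneg that by (intro mult_left_mono discrete_variation_diff_le) auto
    finally show ?thesis .
  qed
  define R where "R k = (\<Sum>i=1..n. ((P (Suc k) i - P k i) - (P (Suc k) 0 - P k 0))
          * ((G i - Q (Suc k) i) - (G (i - 1) - Q (Suc k) (i - 1))))" for k
  have T2: "\<bar>R k\<bar> \<le> \<epsilon> k * (V (Suc k) + V k)" if "k \<le> r" for k
  proof -
    have "\<forall>i\<le>n. \<bar>G i - Q (Suc k) i\<bar> \<le> \<epsilon> k / 2" using Q that by (auto simp: abs_minus_commute)
    from abs_sum_by_parts_le[OF this, of "\<lambda>i. P (Suc k) i - P k i"]
    have "\<bar>R k\<bar> \<le> \<epsilon> k * discrete_variation (\<lambda>i. P (Suc k) i - P k i) n"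
      unfolding R_def .
    also have "\<dots> \<le> \<epsilon> k * (V (Suc k) + V k)"
      unfolding V_def using eps_nonneg[OF that] by (intro mult_left_mono discrete_variation_diff_le)
    finally show ?thesis .
  qed
  have "discrete_variation (\<lambda>i. G i - Q (Suc r) i) n \<le> real (card {1..n}) * \<epsilon> r"
    unfolding discrete_variation_def
  proof (rule sum_bounded_above)
    fix i assume "i \<in> {1..n}"
    then have "\<bar>Q (Suc r) i - G i\<bar> \<le> \<epsilon> r / 2" "\<bar>Q (Suc r) (i - 1) - G (i - 1)\<bar> \<le> \<epsilon> r / 2"
      using Q by auto
    then show "\<bar>(G i - Q (Suc r) i) - (G (i - 1) - Q (Suc r) (i - 1))\<bar> \<le> \<epsilon> r" by linarith
  qed
  then have "A (Suc r) * discrete_variation (\<lambda>i. G i - Q (Suc r) i) n \<le> \<delta> r * (real n * \<epsilon> r)"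
    using A_nonneg[of "Suc r"] by (simp add: A_def mult_left_mono)
  then have rem: "\<bar>defect_sum F G (P (Suc r)) (Q (Suc r)) n\<bar> \<le> real n * \<delta> r * \<epsilon> r"
    using abs_defect_sum_le[of n F "P (Suc r)" "A (Suc r)" G "Q (Suc r)"] F_close
    by (simp add: algebra_simps)
  define T where "T k = defect_sum F (Q (Suc k)) (P k) (Q k) n" for k
  have "(\<Sum>i=1..n. F i * (G i - G (i - 1))) = defect_sum F G (P 0) (Q 0) n"
    using assms(1,3,4) by (simp add: defect_sum_def)
  also have "\<dots> = (\<Sum>k=0..r. T k + R k) + defect_sum F G (P (Suc r)) (Q (Suc r)) n"
    unfolding R_def T_def by (rule defect_sum_telescope)
  finally have "\<bar>\<Sum>i=1..n. F i * (G i - G (i - 1))\<bar>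
      \<le> \<bar>\<Sum>k=0..r. T k + R k\<bar> + \<bar>defect_sum F G (P (Suc r)) (Q (Suc r)) n\<bar>"
    by (simp add: abs_triangle_ineq)
  also have "\<dots> \<le> (\<Sum>k=0..r. \<bar>T k\<bar> + \<bar>R k\<bar>) + real n * \<delta> r * \<epsilon> r"
    using order_trans[OF sum_abs sum_mono[OF abs_triangle_ineq]] rem by (rule add_mono)
  also have "\<dots> \<le> (\<Sum>k=0..r. A k * (W (Suc k) + W k) + \<epsilon> k * (V (Suc k) + V k))
      + real n * \<delta> r * \<epsilon> r"
    using T1 T2 unfolding T_def by (intro add_right_mono sum_mono add_mono) auto
  finally show ?thesis
    by (simp add: A_def V_def W_def sum.distrib)
qed

section \<open>Riemann--Stieltjes sums of regulated functions\<close>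

lemma ereal_mult_add_le_two_power:
  fixes C x y :: real and T :: ereal
  assumes "0 \<le> C" "0 \<le> x" "0 \<le> y" "ereal x \<le> T" "ereal y \<le> T" "k = 0 \<Longrightarrow> y = 0"
  shows "ereal (C * (x + y)) \<le> ereal (2 ^ k * C) * T"
proof (cases T)
  case (real t)
  have "x + y \<le> 2 ^ k * t"
  proof (cases k)
    case (Suc j)
    have "x + y \<le> 2 * t" using assms(4,5) real by simp
    also have "\<dots> \<le> 2 ^ k * t"
      using Suc assms(2,4) real by (intro mult_right_mono) auto
    finally show ?thesis .
  qed (use assms real in simp)
  then have "C * (x + y) \<le> C * (2 ^ k * t)" using assms(1) by (rule mult_left_mono)
  then show ?thesis using real by (simp add: mult.assoc mult.left_commute)
next
  case PInf
  then show ?thesis using assms(1) by (cases "C = 0") (auto simp: zero_ereal_def[symmetric])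
next
  case MInf
  then show ?thesis using assms(4) by simp
qed

lemma ereal_weighted_sum_le:
  fixes C a :: "nat \<Rightarrow> real" and T :: "nat \<Rightarrow> ereal"
  assumes "a 0 = 0" and a_nonneg: "\<And>k. 0 \<le> a k" and C_nonneg: "\<forall>k\<le>r. 0 \<le> C k"
    and a_le: "\<forall>k\<le>r. ereal (a (Suc k)) \<le> T k" and T_mono: "\<forall>k<r. T k \<le> T (Suc k)"
  shows "ereal (\<Sum>k=0..r. C k * (a (Suc k) + a k)) \<le> (\<Sum>k=0..r. ereal (2 ^ k * C k) * T k)"
proof -
  have "ereal (C k * (a (Suc k) + a k)) \<le> ereal (2 ^ k * C k) * T k" if "k \<le> r" for k
  proof (rule ereal_mult_add_le_two_power)
    show "ereal (a k) \<le> T k"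
    proof (cases k)
      case 0
      then show ?thesis using a_le a_nonneg[of 1] \<open>a 0 = 0\<close> by (auto intro: order_trans[rotated])
    next
      case (Suc j)
      have "ereal (a (Suc j)) \<le> T j" using a_le that Suc by auto
      also have "\<dots> \<le> T k" using T_mono that Suc by auto
      finally show ?thesis using Suc by simp
    qed
  qed (use assms that in auto)
  then have "(\<Sum>k=0..r. ereal (C k * (a (Suc k) + a k))) \<le> (\<Sum>k=0..r. ereal (2 ^ k * C k) * T k)"
    by (intro sum_mono) auto
  then show ?thesis by simp
qed

lemma stieltjes_sum_multiscale_TV_bound:
  fixes F G :: "nat \<Rightarrow> real" and P Q :: "nat \<Rightarrow> nat \<Rightarrow> real" and \<delta> \<epsilon> :: "nat \<Rightarrow> real"
    and TF TG :: "nat \<Rightarrow> ereal"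
  assumes "F 0 = 0" and "\<forall>i\<le>n. \<bar>F i\<bar> \<le> D"
    and "P 0 = (\<lambda>_. 0)" and "Q 0 = (\<lambda>_. 0)"
    and P: "\<forall>k\<le>r. \<forall>i\<le>n. \<bar>P (Suc k) i - F i\<bar> \<le> \<delta> k / 2"
    and Q: "\<forall>k\<le>r. \<forall>i\<le>n. \<bar>Q (Suc k) i - G i\<bar> \<le> \<epsilon> k / 2"
    and "\<forall>k\<le>r. ereal (discrete_variation (P (Suc k)) n) \<le> TF k" and "\<forall>k<r. TF k \<le> TF (Suc k)"
    and "\<forall>k\<le>r. ereal (discrete_variation (Q (Suc k)) n) \<le> TG k" and "\<forall>k<r. TG k \<le> TG (Suc k)"
  shows "ereal \<bar>\<Sum>i=1..n. F i * (G i - G (i - 1))\<bar>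
    \<le> (\<Sum>k=0..r. ereal (2 ^ k * (if k = 0 then D else \<delta> (k - 1))) * TG k)
      + (\<Sum>k=0..r. ereal (2 ^ k * \<epsilon> k) * TF k) + ereal (real n * \<delta> r * \<epsilon> r)"
proof -
  have "\<forall>k\<le>r. 0 \<le> (if k = 0 then D else \<delta> (k - 1))"
  proof (intro allI impI)
    fix k assume "k \<le> r"
    show "0 \<le> (if k = 0 then D else \<delta> (k - 1))"
    proof (cases "k = 0")
      case True
      have "\<bar>F 0\<bar> \<le> D" using assms(2) by simp
      then have "0 \<le> D" using abs_ge_zero[of "F 0"] by linarith
      with True show ?thesis by simp
    next
      case False
      have "\<bar>P k 0 - F 0\<bar> \<le> \<delta> (k - 1) / 2"
        using P[rule_format, of "k - 1" 0] False \<open>k \<le> r\<close> by simp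
      then have "0 \<le> \<delta> (k - 1)" using abs_ge_zero[of "P k 0 - F 0"] by linarith
      with False show ?thesis by simp
    qed
  qed
  moreover have "\<forall>k\<le>r. 0 \<le> \<epsilon> k"
  proof (intro allI impI)
    fix k assume "k \<le> r"
    then have "\<bar>Q (Suc k) 0 - G 0\<bar> \<le> \<epsilon> k / 2" using Q by blast
    then show "0 \<le> \<epsilon> k" using abs_ge_zero[of "Q (Suc k) 0 - G 0"] by linarith
  qed
  ultimately have
    "ereal (\<Sum>k=0..r. (if k = 0 then D else \<delta> (k - 1))
        * (discrete_variation (Q (Suc k)) n + discrete_variation (Q k) n))
      \<le> (\<Sum>k=0..r. ereal (2 ^ k * (if k = 0 then D else \<delta> (k - 1))) * TG k)"
    "ereal (\<Sum>k=0..r. \<epsilon> k * (discrete_variation (P (Suc k)) n + discrete_variation (P k) n))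
      \<le> (\<Sum>k=0..r. ereal (2 ^ k * \<epsilon> k) * TF k)"
    using assms(3,4,7-10) discrete_variation_nonneg
    by (auto intro!: ereal_weighted_sum_le simp: discrete_variation_def)
  moreover have "ereal \<bar>\<Sum>i=1..n. F i * (G i - G (i - 1))\<bar>
      \<le> ereal (\<Sum>k=0..r. (if k = 0 then D else \<delta> (k - 1))
          * (discrete_variation (Q (Suc k)) n + discrete_variation (Q k) n))
      + ereal (\<Sum>k=0..r. \<epsilon> k * (discrete_variation (P (Suc k)) n + discrete_variation (P k) n))
      + ereal (real n * \<delta> r * \<epsilon> r)"
    using stieltjes_sum_multiscale_bound[OF assms(1-6)] by simp
  ultimately show ?thesis
    by (meson add_mono order_refl order_trans)
qed

lemma nonneg_if_antimono_upto:
  fixes u :: "nat \<Rightarrow> real"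
  assumes "\<forall>k<r. u (Suc k) \<le> u k" and "0 \<le> u r" and "k \<le> r"
  shows "0 \<le> u k"
proof -
  have "u r \<le> u k"
    by (rule lift_Suc_antimono_le_ivl[of "{..<r}"]) (use assms in auto)
  then show ?thesis using assms(2) by linarith
qed

lemma tagged_partition_mono:
  fixes t \<xi> :: "nat \<Rightarrow> real"
  assumes "t 0 = c" and "t n = d" and t_mono: "\<forall>i<n. t i < t (Suc i)"
    and "\<xi> 0 = c" and tags: "\<forall>i\<in>{1..n}. t (i - 1) \<le> \<xi> i \<and> \<xi> i \<le> t i"
  shows "mono_on {..n} t" and "t ` {..n} \<subseteq> {c..d}" and "mono_on {..n} \<xi>" and "\<xi> ` {..n} \<subseteq> {c..d}"
proof -
  have t_le: "t i \<le> t j" if "i \<le> j" "j \<le> n" for i j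
    using lift_Suc_mono_le_ivl[of "{..<n}" t i j] t_mono that by fastforce
  have \<xi>_le_t: "\<xi> i \<le> t i" if "i \<le> n" for i
    using tags that \<open>t 0 = c\<close> \<open>\<xi> 0 = c\<close> by (cases i) auto
  have \<xi>_le: "\<xi> i \<le> \<xi> j" if "i \<le> j" "j \<le> n" for i j
  proof (rule lift_Suc_mono_le_ivl[of "{..<n}" \<xi> i j])
    fix k assume "k \<in> {..<n}"
    then have "\<xi> k \<le> t k" "t k \<le> \<xi> (Suc k)" using \<xi>_le_t[of k] tags[rule_format, of "Suc k"] by auto
    then show "\<xi> k \<le> \<xi> (Suc k)" by linarith
  qed (use that in auto)
  show "mono_on {..n} t" "mono_on {..n} \<xi>"
    using t_le \<xi>_le by (auto intro!: mono_onI)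
  show "t ` {..n} \<subseteq> {c..d}" using t_le[of 0] t_le[of _ n] assms(1,2) by auto
  show "\<xi> ` {..n} \<subseteq> {c..d}"
  proof
    fix x assume "x \<in> \<xi> ` {..n}"
    then obtain i where "i \<le> n" "x = \<xi> i" by auto
    then show "x \<in> {c..d}" using \<xi>_le[of 0 i] \<xi>_le_t[of i] t_le[of i n] assms(2,4) by auto
  qed
qed

lemma abs_diff_le_SUP_if_regulated:
  assumes "regulated f a b" and "a \<le> c" and "d \<le> b" and "s \<in> {c..d}"
  shows "\<bar>f s - f c\<bar> \<le> (SUP s\<in>{c..d}. \<bar>f s - f c\<bar>)"
proof (rule cSUP_upper[OF assms(4)])
  obtain B where B: "\<forall>s\<in>{a..b}. \<bar>f s\<bar> \<le> B" using regulated_bounded[OF assms(1)] by blast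
  have "\<bar>f s' - f c\<bar> \<le> 2 * B" if "s' \<in> {c..d}" for s'
  proof -
    have "\<bar>f s'\<bar> \<le> B" "\<bar>f c\<bar> \<le> B" using B that assms(2-4) by auto
    then show ?thesis by linarith
  qed
  then show "bdd_above ((\<lambda>s. \<bar>f s - f c\<bar>) ` {c..d})" by (rule bdd_aboveI2)
qed

theorem lemma1:
  fixes f g :: "real \<Rightarrow> real" and a b c d :: real and n r :: nat
    and t \<xi> :: "nat \<Rightarrow> real" and \<delta> \<epsilon> :: "nat \<Rightarrow> real"
  assumes "regulated f a b" and "regulated g a b"
    and "a \<le> c" and "d \<le> b"
    and "t 0 = c" and "t n = d" and "\<forall>i<n. t i < t (Suc i)"
    and "\<xi> 0 = c" and "\<forall>i\<in>{1..n}. t (i - 1) \<le> \<xi> i \<and> \<xi> i \<le> t i"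
    and "\<forall>k<r. \<delta> (Suc k) \<le> \<delta> k" and "\<delta> r \<ge> 0"
    and "\<forall>k<r. \<epsilon> (Suc k) \<le> \<epsilon> k" and "\<epsilon> r \<ge> 0"
  shows "ereal \<bar>(\<Sum>i=1..n. f (\<xi> i) * (g (t i) - g (t (i - 1)))) - f c * (g d - g c)\<bar>
     \<le> (\<Sum>k=0..r. ereal (2 ^ k *
             (if k = 0 then (SUP s\<in>{c..d}. \<bar>f s - f c\<bar>) else \<delta> (k - 1))) * TV g c d (\<epsilon> k))
       + (\<Sum>k=0..r. ereal (2 ^ k * \<epsilon> k) * TV f c d (\<delta> k))
       + ereal (real n * \<delta> r * \<epsilon> r)"
proof -
  note partition = tagged_partition_mono[OF assms(5-9)]
  have \<delta>_nonneg: "\<forall>k\<le>r. 0 \<le> \<delta> k" and \<epsilon>_nonneg: "\<forall>k\<le>r. 0 \<le> \<epsilon> k"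
    using nonneg_if_antimono_upto[OF assms(10,11)] nonneg_if_antimono_upto[OF assms(12,13)] by auto
  obtain W where W: "\<forall>k\<le>r. (\<forall>i\<le>n. \<bar>W k i - f (\<xi> i)\<bar> \<le> \<delta> k / 2)
      \<and> ereal (discrete_variation (W k) n) \<le> TV f c d (\<delta> k)"
    using truncated_variation_approximants[OF \<delta>_nonneg partition(3,4)] by blast
  obtain Z where Z: "\<forall>k\<le>r. (\<forall>i\<le>n. \<bar>Z k i - g (t i)\<bar> \<le> \<epsilon> k / 2)
      \<and> ereal (discrete_variation (Z k) n) \<le> TV g c d (\<epsilon> k)"
    using truncated_variation_approximants[OF \<epsilon>_nonneg partition(1,2)] by blast
  define D where "D = (SUP s\<in>{c..d}. \<bar>f s - f c\<bar>)"
  \<comment> \<open>level \<open>0\<close> is the trivial approximation; it accounts for \<open>\<delta>_(-1)\<close>\<close>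
  define P where "P k = (if k = 0 then (\<lambda>_. 0) else (\<lambda>i. W (k - 1) i - f c))" for k
  define Q where "Q k = (if k = 0 then (\<lambda>_. 0) else Z (k - 1))" for k
  have "(\<Sum>i=1..n. f (\<xi> i) * (g (t i) - g (t (i - 1)))) - f c * (g d - g c)
      = (\<Sum>i=1..n. (f (\<xi> i) - f c) * (g (t i) - g (t (i - 1))))"
    using sum_telescope_shift[of "\<lambda>i. g (t i)" n] assms(5,6)
    by (simp add: left_diff_distrib sum_subtractf sum_distrib_left[symmetric])
  moreover have "ereal \<bar>\<Sum>i=1..n. (f (\<xi> i) - f c) * (g (t i) - g (t (i - 1)))\<bar>
    \<le> (\<Sum>k=0..r. ereal (2 ^ k * (if k = 0 then D else \<delta> (k - 1))) * TV g c d (\<epsilon> k))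
      + (\<Sum>k=0..r. ereal (2 ^ k * \<epsilon> k) * TV f c d (\<delta> k)) + ereal (real n * \<delta> r * \<epsilon> r)"
    using W Z partition(4) abs_diff_le_SUP_if_regulated[OF assms(1,3,4)] assms(8,10,12) TV_antimono
    by (intro stieltjes_sum_multiscale_TV_bound[where P = P and Q = Q])
      (auto simp: P_def Q_def D_def discrete_variation_def)
  ultimately show ?thesis unfolding D_def by simp
qed

end
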